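(* $\mathrm{AAut}_{\mathbb Z}(L)=\mathrm{Isom}_{\mathbb Z}(L)$.
   Context: $\mathbb F$ is a field of characteristic zero, $\mathfrak{sl}_2$ the Lie algebra of $2\times2$ trace-zero matrices over $\mathbb F$ with trace form $(u,v)=\mathrm{tr}(uv)$. Equitable basis: $x=\begin{pmatrix}1&0\\0&-1\end{pmatrix}$, $y=\begin{pmatrix}-1&2\\0&1\end{pmatrix}$, $z=\begin{pmatrix}-1&0\\-2&1\end{pmatrix}$, and $L=\mathbb Zx\oplus\mathbb Zy\oplus\mathbb Zz$. An antiautomorphism of $\mathfrak{sl}_2$ is an $\mathbb F$-linear bijection $\phi$ with $\phi([u,v])=[\phi(v),\phi(u)]$. $\mathrm{AAut}_{\mathbb Z}(L)$ is the group of all automorphisms and antiautomorphisms $\varphi$ of $\mathfrak{sl}_2$ with $\varphi(L)=L$. An isometry is an $\mathbb F$-linear bijection of $\mathfrak{sl}_2$ preserving the trace form; $\mathrm{Isom}_{\mathbb Z}(L)$ is the group of isometries $\varphi$ with $\varphi(L)=L$. *)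

theory Defs
  imports "Jordan_Normal_Form.Matrix"
begin

definition tr2 :: "'a::comm_ring_1 mat \<Rightarrow> 'a" where
  "tr2 A = (\<Sum>i<dim_row A. A $$ (i, i))"

definition sl2 :: "'a::field_char_0 mat set" where
  "sl2 = {A \<in> carrier_mat 2 2. tr2 A = 0}"

definition lie_bracket :: "'a::comm_ring_1 mat \<Rightarrow> 'a mat \<Rightarrow> 'a mat" where
  "lie_bracket u v = u * v - v * u"

definition trace_form :: "'a::comm_ring_1 mat \<Rightarrow> 'a mat \<Rightarrow> 'a" where
  "trace_form u v = tr2 (u * v)"

definition eqx :: "'a::field_char_0 mat" where
  "eqx = mat_of_rows_list 2 [[1, 0], [0, -1]]"
definition eqy :: "'a::field_char_0 mat" where
  "eqy = mat_of_rows_list 2 [[-1, 2], [0, 1]]"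
definition eqz :: "'a::field_char_0 mat" where
  "eqz = mat_of_rows_list 2 [[-1, 0], [-2, 1]]"

definition lattice_L :: "'a::field_char_0 mat set" where
  "lattice_L = {of_int a \<cdot>\<^sub>m eqx + of_int b \<cdot>\<^sub>m eqy + of_int c \<cdot>\<^sub>m eqz | a b c :: int. True}"

definition linear_bij_sl2 :: "('a::field_char_0 mat \<Rightarrow> 'a mat) \<Rightarrow> bool" where
  "linear_bij_sl2 f \<longleftrightarrow>
     bij_betw f sl2 sl2 \<and>
     (\<forall>u\<in>sl2. \<forall>v\<in>sl2. f (u + v) = f u + f v) \<and>
     (\<forall>c. \<forall>u\<in>sl2. f (c \<cdot>\<^sub>m u) = c \<cdot>\<^sub>m f u)"

definition is_automorphism_sl2 :: "('a::field_char_0 mat \<Rightarrow> 'a mat) \<Rightarrow> bool" where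
  "is_automorphism_sl2 f \<longleftrightarrow> linear_bij_sl2 f \<and>
     (\<forall>u\<in>sl2. \<forall>v\<in>sl2. f (lie_bracket u v) = lie_bracket (f u) (f v))"

definition is_antiautomorphism_sl2 :: "('a::field_char_0 mat \<Rightarrow> 'a mat) \<Rightarrow> bool" where
  "is_antiautomorphism_sl2 f \<longleftrightarrow> linear_bij_sl2 f \<and>
     (\<forall>u\<in>sl2. \<forall>v\<in>sl2. f (lie_bracket u v) = lie_bracket (f v) (f u))"

definition is_isometry_sl2 :: "('a::field_char_0 mat \<Rightarrow> 'a mat) \<Rightarrow> bool" where
  "is_isometry_sl2 f \<longleftrightarrow> linear_bij_sl2 f \<and>
     (\<forall>u\<in>sl2. \<forall>v\<in>sl2. trace_form (f u) (f v) = trace_form u v)"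

definition AAut_Z_L :: "('a::field_char_0 mat \<Rightarrow> 'a mat) set" where
  "AAut_Z_L = {f. (is_automorphism_sl2 f \<or> is_antiautomorphism_sl2 f) \<and> f ` lattice_L = lattice_L}"

definition Isom_Z_L :: "('a::field_char_0 mat \<Rightarrow> 'a mat) set" where
  "Isom_Z_L = {f. is_isometry_sl2 f \<and> f ` lattice_L = lattice_L}"

end

theory Submission
  imports Defs
begin

definition mat2 :: "'a::comm_ring_1 \<Rightarrow> 'a \<Rightarrow> 'a \<Rightarrow> 'a \<Rightarrow> 'a mat" where
  "mat2 a b c d =
     mat 2 2 (\<lambda>(i, j). if i = 0 then (if j = 0 then a else b) else (if j = 0 then c else d))"

lemma mat2_carrier [simp]: "mat2 a b c d \<in> carrier_mat 2 2"
  by (simp add: mat2_def)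

lemma mat2_index [simp]:
  "mat2 a b c d $$ (0, 0) = a" "mat2 a b c d $$ (0, 1) = b"
  "mat2 a b c d $$ (1, 0) = c" "mat2 a b c d $$ (1, 1) = d"
  "dim_row (mat2 a b c d) = 2" "dim_col (mat2 a b c d) = 2"
  by (simp_all add: mat2_def)

lemma mat2_eq_iff [simp]:
  "mat2 a b c d = mat2 a' b' c' d' \<longleftrightarrow> a = a' \<and> b = b' \<and> c = c' \<and> d = d'"
  by (metis mat2_index(1-4))

lemma less_2_nat_cases: "(i::nat) < 2 \<longleftrightarrow> i = 0 \<or> i = 1"
  by auto

lemma mat2_of_carrier:
  "A \<in> carrier_mat 2 2 \<Longrightarrow> A = mat2 (A $$ (0, 0)) (A $$ (0, 1)) (A $$ (1, 0)) (A $$ (1, 1))"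
  by (rule eq_matI) (auto simp: mat2_def less_2_nat_cases)

lemma mat2_add [simp]: "mat2 a b c d + mat2 a' b' c' d' = mat2 (a + a') (b + b') (c + c') (d + d')"
  by (rule eq_matI) (auto simp: mat2_def less_2_nat_cases)

lemma mat2_diff [simp]: "mat2 a b c d - mat2 a' b' c' d' = mat2 (a - a') (b - b') (c - c') (d - d')"
  by (rule eq_matI) (auto simp: mat2_def less_2_nat_cases)

lemma mat2_smult [simp]: "k \<cdot>\<^sub>m mat2 a b c d = mat2 (k * a) (k * b) (k * c) (k * d)"
  by (rule eq_matI) (auto simp: mat2_def less_2_nat_cases)

lemma mat2_mult [simp]:
  "mat2 a b c d * mat2 a' b' c' d' =
     mat2 (a * a' + b * c') (a * b' + b * d') (c * a' + d * c') (c * b' + d * d')"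
  by (rule eq_matI) (auto simp: mat2_def less_2_nat_cases scalar_prod_def numeral_2_eq_2)

lemma tr2_mat2 [simp]: "tr2 (mat2 a b c d) = a + d"
  by (simp add: tr2_def numeral_2_eq_2 mat2_def)

lemma sl2_iff: "u \<in> sl2 \<longleftrightarrow> (\<exists>a b c. u = mat2 a b c (- a))"
proof
  assume "u \<in> sl2"
  then have "u \<in> carrier_mat 2 2" and "tr2 u = 0"
    by (auto simp: sl2_def)
  then show "\<exists>a b c. u = mat2 a b c (- a)"
    by (metis mat2_of_carrier tr2_mat2 add_eq_0_iff)
qed (auto simp: sl2_def)

lemma sl2E:
  assumes "u \<in> sl2"
  obtains a b c where "u = mat2 a b c (- a)"
  using assms by (auto simp: sl2_iff)

lemma mat2_in_sl2_iff [simp]: "mat2 a b c d \<in> sl2 \<longleftrightarrow> a + d = 0"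
  by (simp add: sl2_def)

lemma sl2_smult [simp]: "u \<in> sl2 \<Longrightarrow> k \<cdot>\<^sub>m u \<in> sl2"
  by (elim sl2E) simp

lemma sl2_add [simp]: "u \<in> sl2 \<Longrightarrow> v \<in> sl2 \<Longrightarrow> u + v \<in> sl2"
  by (elim sl2E) simp

lemma sl2_lie_bracket [simp]: "u \<in> sl2 \<Longrightarrow> v \<in> sl2 \<Longrightarrow> lie_bracket u v \<in> sl2"
  by (elim sl2E) (simp add: lie_bracket_def algebra_simps)

lemma lie_bracket_lie_bracket_sl2:
  assumes "u \<in> sl2" "v \<in> sl2" "w \<in> sl2"
  shows "lie_bracket u (lie_bracket v w) =
    (2 * trace_form u v) \<cdot>\<^sub>m w + (- 2 * trace_form u w) \<cdot>\<^sub>m v"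
  using assms by (elim sl2E) (simp add: lie_bracket_def trace_form_def algebra_simps)

lemma lie_bracket_swap_sl2:
  "u \<in> sl2 \<Longrightarrow> v \<in> sl2 \<Longrightarrow> lie_bracket v u = (- 1) \<cdot>\<^sub>m lie_bracket u v"
  by (elim sl2E) (simp add: lie_bracket_def algebra_simps)

lemma lie_bracket_lie_bracket_swap_sl2:
  "u \<in> sl2 \<Longrightarrow> v \<in> sl2 \<Longrightarrow> w \<in> sl2 \<Longrightarrow>
    lie_bracket (lie_bracket w v) u = lie_bracket u (lie_bracket v w)"
  by (elim sl2E) (simp add: lie_bracket_def algebra_simps)

lemma trace_form_smult_right_sl2:
  "u \<in> sl2 \<Longrightarrow> v \<in> sl2 \<Longrightarrow> trace_form u (k \<cdot>\<^sub>m v) = k * trace_form u v"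
  by (elim sl2E) (simp add: trace_form_def algebra_simps)

lemma trace_form_nondegenerate_sl2:
  assumes "x \<in> sl2" "y \<in> sl2" and "\<And>u. u \<in> sl2 \<Longrightarrow> trace_form u x = trace_form u y"
  shows "x = y"
proof -
  from assms(1,2) obtain a b c a' b' c'
    where x: "x = mat2 a b c (- a)" and y: "y = mat2 a' b' c' (- a')"
    by (elim sl2E)
  show ?thesis
    using assms(3)[of "mat2 1 0 0 (- 1)"] assms(3)[of "mat2 0 1 0 0"] assms(3)[of "mat2 0 0 1 0"]
    by (simp add: x y trace_form_def)
qed

definition sl2_h :: "'a::field_char_0 mat" where "sl2_h = mat2 1 0 0 (- 1)"
definition sl2_e :: "'a::field_char_0 mat" where "sl2_e = mat2 0 1 0 0"
definition sl2_f :: "'a::field_char_0 mat" where "sl2_f = mat2 0 0 1 0"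

lemma sl2_basis_in_sl2 [simp]: "sl2_h \<in> sl2" "sl2_e \<in> sl2" "sl2_f \<in> sl2"
  by (simp_all add: sl2_h_def sl2_e_def sl2_f_def)

lemma mat2_sl2_basis: "mat2 a b c (- a) = a \<cdot>\<^sub>m sl2_h + b \<cdot>\<^sub>m sl2_e + c \<cdot>\<^sub>m sl2_f"
  by (simp add: sl2_h_def sl2_e_def sl2_f_def)

lemma linear_bij_sl2_image: "linear_bij_sl2 f \<Longrightarrow> f ` sl2 = sl2"
  by (simp add: linear_bij_sl2_def bij_betw_def)

lemma linear_bij_sl2_mem: "linear_bij_sl2 f \<Longrightarrow> u \<in> sl2 \<Longrightarrow> f u \<in> sl2"
  using linear_bij_sl2_image by blast

lemma linear_bij_sl2_lincomb:
  assumes "linear_bij_sl2 f" "u \<in> sl2" "v \<in> sl2"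
  shows "f (a \<cdot>\<^sub>m u + b \<cdot>\<^sub>m v) = a \<cdot>\<^sub>m f u + b \<cdot>\<^sub>m f v"
  using assms by (simp add: linear_bij_sl2_def)

lemma linear_bij_sl2_mat2:
  assumes "linear_bij_sl2 f"
  shows "f (mat2 a b c (- a)) = a \<cdot>\<^sub>m f sl2_h + b \<cdot>\<^sub>m f sl2_e + c \<cdot>\<^sub>m f sl2_f"
  using assms by (simp add: mat2_sl2_basis linear_bij_sl2_def)

lemma linear_bij_sl2_eq_zero:
  assumes f: "linear_bij_sl2 f" and x: "x \<in> sl2" and fx: "f x = mat2 0 0 0 0"
  shows "x = mat2 0 0 0 0"
proof -
  obtain a b c where "f sl2_h = mat2 a b c (- a)"
    using sl2E[OF linear_bij_sl2_mem[OF f sl2_basis_in_sl2(1)]] .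
  then have "f (0 \<cdot>\<^sub>m sl2_h) = mat2 0 0 0 0"
    using f by (simp add: linear_bij_sl2_def)
  moreover have "inj_on f sl2"
    using f by (simp add: linear_bij_sl2_def bij_betw_def)
  ultimately show ?thesis
    using x fx by (simp add: inj_on_def sl2_h_def)
qed

lemma isometry_if_preserves_double_bracket:
  assumes f: "linear_bij_sl2 f"
    and preserves: "\<And>u v w. u \<in> sl2 \<Longrightarrow> v \<in> sl2 \<Longrightarrow> w \<in> sl2 \<Longrightarrow>
      f (lie_bracket u (lie_bracket v w)) = lie_bracket (f u) (lie_bracket (f v) (f w))"
  shows "is_isometry_sl2 f"
proof -
  have "trace_form (f u) (f v) = trace_form u v" if u: "u \<in> sl2" and v: "v \<in> sl2" for u v
  proof -
    (* Expanding both sides of preserves by the double-bracket identity and subtracting gives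
       f (defect x * y - defect y * x) = 0; testing the resulting relation on e, f forces defect = 0. *)
    define defect where "defect x = 2 * (trace_form u x - trace_form (f u) (f x))" for x
    have defect_combination: "defect x \<cdot>\<^sub>m y + (- defect y) \<cdot>\<^sub>m x = mat2 0 0 0 0"
      if x: "x \<in> sl2" and y: "y \<in> sl2" for x y
    proof -
      define p q r s where "p = trace_form u x" and "q = trace_form u y"
        and "r = trace_form (f u) (f x)" and "s = trace_form (f u) (f y)"
      have "f (lie_bracket u (lie_bracket x y)) = (2 * p) \<cdot>\<^sub>m f y + (- 2 * q) \<cdot>\<^sub>m f x"
        using lie_bracket_lie_bracket_sl2[OF u x y] linear_bij_sl2_lincomb[OF f y x]
        by (simp add: p_def q_def)
      moreover have
        "lie_bracket (f u) (lie_bracket (f x) (f y)) = (2 * r) \<cdot>\<^sub>m f y + (- 2 * s) \<cdot>\<^sub>m f x"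
        unfolding r_def s_def by (intro lie_bracket_lie_bracket_sl2 linear_bij_sl2_mem[OF f] u x y)
      ultimately have same:
        "(2 * p) \<cdot>\<^sub>m f y + (- 2 * q) \<cdot>\<^sub>m f x = (2 * r) \<cdot>\<^sub>m f y + (- 2 * s) \<cdot>\<^sub>m f x"
        using preserves[OF u x y] by simp
      have "f (defect x \<cdot>\<^sub>m y + (- defect y) \<cdot>\<^sub>m x) =
          ((2 * p) \<cdot>\<^sub>m f y + (- 2 * q) \<cdot>\<^sub>m f x) - ((2 * r) \<cdot>\<^sub>m f y + (- 2 * s) \<cdot>\<^sub>m f x)"
        unfolding linear_bij_sl2_lincomb[OF f y x] defect_def p_def q_def r_def s_def
        using linear_bij_sl2_mem[OF f x] linear_bij_sl2_mem[OF f y]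
        by (elim sl2E) (simp add: algebra_simps)
      also have "\<dots> = mat2 0 0 0 0"
        unfolding same using linear_bij_sl2_mem[OF f x] linear_bij_sl2_mem[OF f y]
        by (elim sl2E) simp
      finally show ?thesis
        by (rule linear_bij_sl2_eq_zero[OF f, rotated]) (simp add: x y)
    qed
    have "defect sl2_e = 0"
      using defect_combination[of sl2_e sl2_f] by (simp add: sl2_e_def sl2_f_def)
    then have "defect v = 0"
      using defect_combination[OF v, of sl2_e] v by (elim sl2E) (simp add: sl2_e_def)
    then show ?thesis
      by (simp add: defect_def)
  qed
  with f show ?thesis
    by (simp add: is_isometry_sl2_def)
qed

lemma automorphism_preserves_double_bracket:
  assumes "is_automorphism_sl2 f" "u \<in> sl2" "v \<in> sl2" "w \<in> sl2"
  shows "f (lie_bracket u (lie_bracket v w)) = lie_bracket (f u) (lie_bracket (f v) (f w))"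
  using assms by (simp add: is_automorphism_sl2_def)

lemma antiautomorphism_preserves_double_bracket:
  assumes f: "is_antiautomorphism_sl2 f" and uvw: "u \<in> sl2" "v \<in> sl2" "w \<in> sl2"
  shows "f (lie_bracket u (lie_bracket v w)) = lie_bracket (f u) (lie_bracket (f v) (f w))"
proof -
  have lin: "linear_bij_sl2 f"
    using f by (simp add: is_antiautomorphism_sl2_def)
  have "f (lie_bracket u (lie_bracket v w)) = lie_bracket (lie_bracket (f w) (f v)) (f u)"
    using f uvw by (simp add: is_antiautomorphism_sl2_def)
  also have "\<dots> = lie_bracket (f u) (lie_bracket (f v) (f w))"
    by (intro lie_bracket_lie_bracket_swap_sl2 linear_bij_sl2_mem[OF lin] uvw)
  finally show ?thesis .
qed

definition det3 :: "'a::comm_ring_1 \<Rightarrow> 'a \<Rightarrow> 'a \<Rightarrow> 'a \<Rightarrow> 'a \<Rightarrow> 'a \<Rightarrow> 'a \<Rightarrow> 'a \<Rightarrow> 'a \<Rightarrow> 'a" where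
  "det3 a1 b1 c1 a2 b2 c2 a3 b3 c3 =
     a1 * (b2 * c3 - c2 * b3) - b1 * (a2 * c3 - c2 * a3) + c1 * (a2 * b3 - b2 * a3)"

definition triple_form :: "'a::comm_ring_1 mat \<Rightarrow> 'a mat \<Rightarrow> 'a mat \<Rightarrow> 'a" where
  "triple_form u v w = trace_form u (lie_bracket v w)"

lemma triple_form_lincomb:
  assumes "x \<in> sl2" "y \<in> sl2" "z \<in> sl2"
  shows "triple_form (a1 \<cdot>\<^sub>m x + b1 \<cdot>\<^sub>m y + c1 \<cdot>\<^sub>m z) (a2 \<cdot>\<^sub>m x + b2 \<cdot>\<^sub>m y + c2 \<cdot>\<^sub>m z)
      (a3 \<cdot>\<^sub>m x + b3 \<cdot>\<^sub>m y + c3 \<cdot>\<^sub>m z) = det3 a1 b1 c1 a2 b2 c2 a3 b3 c3 * triple_form x y z"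
  using assms
  by (elim sl2E) (simp add: triple_form_def lie_bracket_def trace_form_def det3_def algebra_simps)

lemma triple_form_sq:
  assumes "u \<in> sl2" "v \<in> sl2" "w \<in> sl2"
  shows "(triple_form u v w)\<^sup>2 = - 2 * det3
    (trace_form u u) (trace_form u v) (trace_form u w)
    (trace_form v u) (trace_form v v) (trace_form v w)
    (trace_form w u) (trace_form w v) (trace_form w w)"
  using assms by (elim sl2E)
    (simp add: triple_form_def lie_bracket_def trace_form_def det3_def algebra_simps power2_eq_square)

lemma triple_form_sl2_basis: "triple_form sl2_h sl2_e sl2_f = 2"
  by (simp add: sl2_h_def sl2_e_def sl2_f_def triple_form_def lie_bracket_def trace_form_def)

lemma triple_form_mat2:
  fixes a1 b1 c1 a2 b2 c2 a3 b3 c3 :: "'a::field_char_0"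
  shows "triple_form (mat2 a1 b1 c1 (- a1)) (mat2 a2 b2 c2 (- a2)) (mat2 a3 b3 c3 (- a3)) =
    2 * det3 a1 b1 c1 a2 b2 c2 a3 b3 c3"
  unfolding mat2_sl2_basis by (simp add: triple_form_lincomb triple_form_sl2_basis)

(* By triple_form_mat2 and triple_form_linear_image, this is the determinant of f
   with respect to the basis h, e, f. *)
definition sl2_det :: "('a::field_char_0 mat \<Rightarrow> 'a mat) \<Rightarrow> 'a" where
  "sl2_det f = triple_form (f sl2_h) (f sl2_e) (f sl2_f) / 2"

lemma triple_form_linear_image:
  assumes f: "linear_bij_sl2 f" and uvw: "u \<in> sl2" "v \<in> sl2" "w \<in> sl2"
  shows "triple_form (f u) (f v) (f w) = sl2_det f * triple_form u v w"
  using uvw by (elim sl2E)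
    (simp add: sl2_det_def linear_bij_sl2_mat2[OF f] triple_form_lincomb linear_bij_sl2_mem[OF f]
      triple_form_mat2)

lemma isometry_sl2_det_sq:
  assumes f: "is_isometry_sl2 f"
  shows "(sl2_det f)\<^sup>2 = 1"
proof -
  have lin: "linear_bij_sl2 f"
    and tf: "\<And>u v. u \<in> sl2 \<Longrightarrow> v \<in> sl2 \<Longrightarrow> trace_form (f u) (f v) = trace_form u v"
    using f by (auto simp: is_isometry_sl2_def)
  have "(triple_form (f sl2_h) (f sl2_e) (f sl2_f))\<^sup>2 = (triple_form sl2_h sl2_e sl2_f)\<^sup>2"
    by (simp add: triple_form_sq linear_bij_sl2_mem[OF lin] tf)
  then show ?thesis
    by (simp add: sl2_det_def triple_form_sl2_basis power_divide)
qed

lemma isometry_lie_bracket: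
  assumes f: "is_isometry_sl2 f" and v: "v \<in> sl2" and w: "w \<in> sl2"
  shows "lie_bracket (f v) (f w) = sl2_det f \<cdot>\<^sub>m f (lie_bracket v w)"
proof (rule trace_form_nondegenerate_sl2)
  have lin: "linear_bij_sl2 f"
    and tf: "\<And>u v. u \<in> sl2 \<Longrightarrow> v \<in> sl2 \<Longrightarrow> trace_form (f u) (f v) = trace_form u v"
    using f by (auto simp: is_isometry_sl2_def)
  show "lie_bracket (f v) (f w) \<in> sl2" "sl2_det f \<cdot>\<^sub>m f (lie_bracket v w) \<in> sl2"
    by (simp_all add: linear_bij_sl2_mem[OF lin] v w)
  fix x :: "'a mat"
  assume "x \<in> sl2"
  then obtain u where u: "u \<in> sl2" and x: "x = f u"
    using linear_bij_sl2_image[OF lin] by (metis imageE)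
  have "trace_form (f u) (lie_bracket (f v) (f w)) = sl2_det f * triple_form u v w"
    using triple_form_linear_image[OF lin u v w] by (simp add: triple_form_def)
  also have "\<dots> = sl2_det f * trace_form (f u) (f (lie_bracket v w))"
    by (simp add: triple_form_def tf u v w)
  also have "\<dots> = trace_form (f u) (sl2_det f \<cdot>\<^sub>m f (lie_bracket v w))"
    by (simp add: trace_form_smult_right_sl2 linear_bij_sl2_mem[OF lin] u v w)
  finally show
    "trace_form x (lie_bracket (f v) (f w)) = trace_form x (sl2_det f \<cdot>\<^sub>m f (lie_bracket v w))"
    by (simp add: x)
qed

lemma isometry_is_automorphism_or_antiautomorphism:
  assumes f: "is_isometry_sl2 f"
  shows "is_automorphism_sl2 f \<or> is_antiautomorphism_sl2 f"
proof -
  have lin: "linear_bij_sl2 f"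
    using f by (simp add: is_isometry_sl2_def)
  note bracket = isometry_lie_bracket[OF f]
  consider "sl2_det f = 1" | "sl2_det f = - 1"
    using isometry_sl2_det_sq[OF f] by (auto simp: power2_eq_1_iff)
  then show ?thesis
  proof cases
    case 1
    have "f (lie_bracket v w) = lie_bracket (f v) (f w)" if vw: "v \<in> sl2" "w \<in> sl2" for v w
      using linear_bij_sl2_mem[OF lin sl2_lie_bracket[OF vw]]
      by (elim sl2E) (simp add: bracket vw 1)
    with lin show ?thesis
      by (simp add: is_automorphism_sl2_def)
  next
    case 2
    have "f (lie_bracket v w) = lie_bracket (f w) (f v)" if vw: "v \<in> sl2" "w \<in> sl2" for v w
    proof -
      have "lie_bracket (f w) (f v) = (- 1) \<cdot>\<^sub>m ((- 1) \<cdot>\<^sub>m f (lie_bracket v w))"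
        using lie_bracket_swap_sl2[of "f v" "f w"] bracket[OF vw] linear_bij_sl2_mem[OF lin] vw
        by (simp add: 2)
      then show ?thesis
        using linear_bij_sl2_mem[OF lin sl2_lie_bracket[OF vw]] by (elim sl2E) simp
    qed
    with lin show ?thesis
      by (simp add: is_antiautomorphism_sl2_def)
  qed
qed

lemma automorphism_or_antiautomorphism_iff_isometry:
  "is_automorphism_sl2 f \<or> is_antiautomorphism_sl2 f \<longleftrightarrow> is_isometry_sl2 f"
  using isometry_if_preserves_double_bracket automorphism_preserves_double_bracket
    antiautomorphism_preserves_double_bracket isometry_is_automorphism_or_antiautomorphism
  by (metis is_automorphism_sl2_def is_antiautomorphism_sl2_def)

theorem theorem5p5:
  shows "(AAut_Z_L :: ('a::field_char_0 mat \<Rightarrow> 'a mat) set) = Isom_Z_L"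
  unfolding AAut_Z_L_def Isom_Z_L_def automorphism_or_antiautomorphism_iff_isometry ..

end
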